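(* Let $X=\sum_{p,q\ge0}x_{p,q}a^pb^q\in\tilde{\mathcal{A}}_{conv.}$ with $x_{0,0}=1$. Then $X$ is invertible in the algebra $\tilde{\mathcal{A}}_{conv.}$.
   Context: Let $\mathcal{A}_0$ be the $\mathbb{C}$-algebra of polynomials in $a,b$ subject to $ab-ba=b^2$, and $\widehat{\mathcal{A}}$ its completion for the $(a,b)$-adic topology, i.e. the algebra of formal power series $\sum_{p,q\ge0}\gamma_{p,q}a^pb^q$ with product extending that of $\mathcal{A}_0$. $\tilde{\mathcal{A}}_{conv.}\subset\widehat{\mathcal{A}}$ is the subalgebra of those series for which there exist $R>1$, $C_R>0$ with $|\gamma_{p,q}|\le C_RR^{p+q}q!$ for all $p,q\in\mathbb{N}$. *)

theory Defs
  imports Complex_Main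
begin

text \<open>Elements of the completed algebra are coefficient families
  X p q = coefficient of a^p b^q (normally ordered monomials).\<close>

type_synonym ser = "nat \<Rightarrow> nat \<Rightarrow> complex"

text \<open>nf q r k l = coefficient of a^k b^l in the normal form of b^q a^r,
  computed from the relation  b^l a = a b^l - l b^(l+1)  (consequence of ab - ba = b^2).\<close>
fun nf :: "nat \<Rightarrow> nat \<Rightarrow> nat \<Rightarrow> nat \<Rightarrow> complex" where
  "nf q 0 k l = (if k = 0 \<and> l = q then 1 else 0)"
| "nf q (Suc r) k l =
     (if k \<ge> 1 then nf q r (k - 1) l else 0)
     - (if l \<ge> 1 then of_nat (l - 1) * nf q r k (l - 1) else 0)"

text \<open>Product: (a^p b^q)(a^r b^s) = a^p (b^q a^r) b^s; since the relation is homogeneous,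
  only finitely many terms contribute to each coefficient.\<close>
definition amult :: "ser \<Rightarrow> ser \<Rightarrow> ser" where
  "amult X Y i j =
     (\<Sum>p\<le>i. \<Sum>s\<le>j. \<Sum>q\<le>i+j. \<Sum>r\<le>i+j. X p q * Y r s * nf q r (i - p) (j - s))"

definition aone :: ser where
  "aone p q = (if p = 0 \<and> q = 0 then 1 else 0)"

definition conv_ser :: "ser \<Rightarrow> bool" where
  "conv_ser X \<longleftrightarrow> (\<exists>R C. R > 1 \<and> C > 0 \<and>
      (\<forall>p q. norm (X p q) \<le> C * R ^ (p + q) * fact q))"

end

theory Submission
  imports Defs
begin

text \<open>Since the relation is homogeneous, the coefficient of \<open>a\<^sup>i b\<^sup>j\<close> in \<open>X Y\<close> is
  \<open>X\<^sub>0\<^sub>0 Y\<^sub>i\<^sub>j\<close> plus terms involving only coefficients of \<open>Y\<close> of smaller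
  total degree, so \<open>X\<^sub>0\<^sub>0 = 1\<close> determines a formal right inverse degree by degree.
  Its growth is controlled by induction on the degree with the majorant
  \<open>K\<^sup>r\<^sup>+\<^sup>s (r+s)!/r! \<le> (2K)\<^sup>r\<^sup>+\<^sup>s s!\<close>: the normal-ordering coefficients of
  \<open>b\<^sup>q a\<^sup>r\<close> sum against it by the hockey-stick identity, and a geometric series in \<open>R/K\<close>
  closes the induction for \<open>K = R (6C + 2)\<close>.

  The right inverse is two-sided because the product is associative, which is transported
  from a faithful anti-representation \<open>a \<mapsto> z t\<close>, \<open>b \<mapsto> t\<close> into a skew power series ring:
  a right inverse \<open>Y\<close> of \<open>X\<close> has its own right inverse \<open>Z\<close>, and
  \<open>X = X (Y Z) = (X Y) Z = Z\<close>.\<close>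

section \<open>Normal ordering of \<open>b\<^sup>q a\<^sup>r\<close>\<close>

lemma nf_eq:
  "nf q r k l = (if k + l = q + r \<and> k \<le> r
      then (-1)^(r-k) * of_nat ((r choose k) * pochhammer q (r-k)) else 0)"
proof (induction r arbitrary: k l)
  case 0
  then show ?case by auto
next
  case (Suc r)
  have rec: "nf q (Suc r) k l = (if k \<ge> 1 then nf q r (k - 1) l else 0)
     - (if l \<ge> 1 then of_nat (l - 1) * nf q r k (l - 1) else 0)"
    by simp
  consider "k = 0" | "k = Suc r" | "k > Suc r" | k' where "k = Suc k'" "k' < r"
    by (cases k) (auto, metis linorder_neqE_nat)
  then show ?case
  proof cases
    case 1
    show ?thesis
    proof (cases "l = Suc (q + r)")
      case True
      have "pochhammer q (Suc r) = (q + r) * pochhammer q r"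
        by (simp add: pochhammer_rec' mult.commute)
      then show ?thesis unfolding rec Suc.IH using 1 True by simp
    next
      case False
      then show ?thesis unfolding rec Suc.IH using 1 by auto
    qed
  next
    case 2
    then show ?thesis unfolding rec Suc.IH by simp
  next
    case 3
    then show ?thesis unfolding rec Suc.IH by auto
  next
    case 4
    define m where "m = r - k"
    show ?thesis
    proof (cases "l = Suc (q + m)")
      case True
      have idx: "k \<ge> 1" "k - 1 = k'" "k' + l = q + r" "k + (l - 1) = q + r" "k \<le> r" "k' \<le> r" "l \<ge> 1"
        "r - k' = Suc m" "Suc r - k = Suc m" "r - k = m" "k + m = r" "l - 1 = q + m" "k + l = Suc (q + r)"
        using 4 True by (auto simp: m_def)
      have "nf q (Suc r) k l = (-1) ^ Suc m * of_nat ((r choose k') * pochhammer q (Suc m))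
          - of_nat (q + m) * ((-1) ^ m * of_nat ((r choose k) * pochhammer q m))"
        unfolding rec Suc.IH using idx by simp
      also have "\<dots> = (-1) ^ Suc m * of_nat (((r choose k') + (r choose k)) * pochhammer q (Suc m))"
        by (simp add: pochhammer_rec' algebra_simps)
      also have "(r choose k') + (r choose k) = Suc r choose k"
        using 4 by simp
      finally show ?thesis using idx by (simp del: nf.simps)
    next
      case False
      then show ?thesis unfolding rec Suc.IH using 4 by (auto simp: m_def)
    qed
  qed
qed

lemma nf_eq_0: "\<not> (k + l = q + r \<and> k \<le> r) \<Longrightarrow> nf q r k l = 0"
  by (auto simp: nf_eq)

lemma norm_nf:
  "norm (nf q r k l) = (if k + l = q + r \<and> k \<le> r then real ((r choose k) * pochhammer q (r - k)) else 0)"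
  by (auto simp: nf_eq norm_mult norm_power)

lemma nf_0_left: "nf 0 r k l = (if k = r \<and> l = 0 then 1 else 0)"
  by (auto simp: nf_eq pochhammer_0_left)

lemma sum_atMost_restrict:
  "(c::nat) \<le> d \<Longrightarrow> (\<Sum>r\<le>d. if r \<le> c then g r else 0) = (\<Sum>r\<le>c. g r)"
  by (rule sum.mono_neutral_cong_right) auto

lemma sum_box_diagonal:
  fixes c d :: nat
  assumes "c \<le> d"
  shows "(\<Sum>r\<le>d. \<Sum>s\<le>d. if r + s = c then f r s else 0) = (\<Sum>r\<le>c. f r (c - r))"
proof -
  have "(\<Sum>s\<le>d. if r + s = c then f r s else 0) = (if r \<le> c then f r (c - r) else 0)" for r
  proof -
    have "(\<Sum>s\<le>d. if r + s = c then f r s else 0) = (\<Sum>s\<le>d. if s = c - r then (if r \<le> c then f r s else 0) else 0)"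
      by (rule sum.cong) auto
    moreover have "c - r \<le> d" using assms by linarith
    ultimately show ?thesis by simp
  qed
  then show ?thesis using assms by (simp add: sum_atMost_restrict)
qed

lemma sum_rotate3:
  "(\<Sum>i\<in>A. \<Sum>s\<in>C. \<Sum>q\<in>D. f i s q) = (\<Sum>s\<in>C. \<Sum>q\<in>D. \<Sum>i\<in>A. f i s q)"
  by (rule trans[OF sum.swap], rule sum.cong[OF refl], rule sum.swap)

lemma sum_rotate4:
  "(\<Sum>i\<in>A. \<Sum>p\<in>B. \<Sum>s\<in>C. \<Sum>q\<in>D. f i p s q) = (\<Sum>p\<in>B. \<Sum>s\<in>C. \<Sum>q\<in>D. \<Sum>i\<in>A. f i p s q)"
  by (rule trans[OF sum.swap], rule sum.cong[OF refl], rule sum_rotate3)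

lemma sum_rotate5:
  "(\<Sum>i\<in>A. \<Sum>p\<in>B. \<Sum>s\<in>C. \<Sum>q\<in>D. \<Sum>r\<in>E. f i p s q r)
   = (\<Sum>p\<in>B. \<Sum>s\<in>C. \<Sum>q\<in>D. \<Sum>r\<in>E. \<Sum>i\<in>A. f i p s q r)"
  by (rule trans[OF sum.swap], rule sum.cong[OF refl], rule sum_rotate4)

lemma amult_as_box_sum:
  assumes "i + j \<le> d"
  shows "amult X Y i j = (\<Sum>p\<le>d. \<Sum>s\<le>d. \<Sum>q\<le>d. \<Sum>r\<le>d.
    if p \<le> i \<and> s \<le> j then X p q * Y r s * nf q r (i - p) (j - s) else 0)"
proof -
  have "(\<Sum>q\<le>i + j. \<Sum>r\<le>i + j. X p q * Y r s * nf q r (i - p) (j - s))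
      = (\<Sum>q\<le>d. \<Sum>r\<le>d. X p q * Y r s * nf q r (i - p) (j - s))" for p s
    using assms by (intro sum.mono_neutral_cong_left) (auto intro!: sum.neutral simp: nf_eq_0)
  then have "amult X Y i j = (\<Sum>p\<le>i. \<Sum>s\<le>j. \<Sum>q\<le>d. \<Sum>r\<le>d. X p q * Y r s * nf q r (i - p) (j - s))"
    by (simp add: amult_def)
  also have "\<dots> = (\<Sum>p\<le>d. if p \<le> i then \<Sum>s\<le>d. if s \<le> j then
      \<Sum>q\<le>d. \<Sum>r\<le>d. X p q * Y r s * nf q r (i - p) (j - s) else 0 else 0)"
    using assms by (simp add: sum_atMost_restrict)
  also have "\<dots> = (\<Sum>p\<le>d. \<Sum>s\<le>d. \<Sum>q\<le>d. \<Sum>r\<le>d.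
      if p \<le> i \<and> s \<le> j then X p q * Y r s * nf q r (i - p) (j - s) else 0)"
  proof -
    have pull: "(\<Sum>x\<le>d. if P then f x else 0) = (if P then \<Sum>x\<le>d. f x else 0)"
      for P and f :: "nat \<Rightarrow> complex"
      by simp
    show ?thesis by (simp only: pull) (intro sum.cong refl, auto)
  qed
  finally show ?thesis .
qed

section \<open>A faithful representation on skew power series\<close>

text \<open>A function \<open>F :: skew_ser\<close> stands for the series \<open>\<Sum>\<^sub>d F z d \<cdot> t\<^sup>d\<close> whose coefficients
  are functions of \<open>z\<close>, multiplied according to \<open>t\<^sup>c g(z) = g(z + c) t\<^sup>c\<close>.\<close>

type_synonym skew_ser = "complex \<Rightarrow> nat \<Rightarrow> complex"

definition skew_mult :: "skew_ser \<Rightarrow> skew_ser \<Rightarrow> skew_ser"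
  where "skew_mult F G z d = (\<Sum>c\<le>d. F z c * G (z + of_nat c) (d - c))"

definition skew_one :: skew_ser
  where "skew_one z d = (if d = 0 then 1 else 0)"

lemma skew_mult_assoc: "skew_mult (skew_mult F G) H = skew_mult F (skew_mult G H)"
proof (intro ext)
  fix z d
  define g where "g a b = F z a * (G (z + of_nat a) b * H (z + of_nat a + of_nat b) (d - a - b))" for a b
  have "skew_mult F (skew_mult G H) z d = (\<Sum>a\<le>d. \<Sum>b\<le>d - a. g a b)"
    unfolding skew_mult_def g_def by (simp add: sum_distrib_left algebra_simps)
  also have "\<dots> = (\<Sum>(a, b)\<in>{(a, b). a + b \<le> d}. g a b)"
    by (subst sum.Sigma) (auto intro!: sum.cong)
  also have "\<dots> = (\<Sum>c\<le>d. \<Sum>a\<le>c. g a (c - a))"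
    by (rule sum.triangle_reindex_eq)
  also have "\<dots> = skew_mult (skew_mult F G) H z d"
    unfolding skew_mult_def sum_distrib_right
  proof (intro sum.cong refl)
    fix c a assume "c \<in> {..d}" "a \<in> {..c}"
    then have e: "z + of_nat a + of_nat (c - a) = z + of_nat c" "d - a - (c - a) = d - c"
      by (simp_all add: of_nat_diff)
    show "g a (c - a) = F z a * G (z + of_nat a) (c - a) * H (z + of_nat c) (d - c)"
      unfolding g_def e by (simp add: mult.assoc)
  qed
  finally show "skew_mult (skew_mult F G) H z d = skew_mult F (skew_mult G H) z d" ..
qed

lemma skew_mult_one_left: "skew_mult skew_one F = F"
proof (intro ext)
  fix z d
  have "skew_mult skew_one F z d = (\<Sum>c\<le>d. if c = 0 then F z d else 0)"
    unfolding skew_mult_def skew_one_def by (rule sum.cong) auto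
  then show "skew_mult skew_one F z d = F z d" by simp
qed

lemma skew_mult_one_right: "skew_mult F skew_one = F"
proof (intro ext)
  fix z d
  have "skew_mult F skew_one z d = (\<Sum>c\<le>d. if c = d then F z c else 0)"
    unfolding skew_mult_def skew_one_def by (rule sum.cong) auto
  then show "skew_mult F skew_one z d = F z d" by simp
qed

text \<open>The anti-homomorphism \<open>b \<mapsto> t\<close>, \<open>a \<mapsto> z t\<close> sends \<open>a\<^sup>p b\<^sup>q\<close> to
  \<open>t\<^sup>q (z t)\<^sup>p = pochhammer (z + q) p \<cdot> t\<^sup>p\<^sup>+\<^sup>q\<close>.\<close>

definition skew_rep :: "ser \<Rightarrow> skew_ser"
  where "skew_rep X z d = (\<Sum>p\<le>d. X p (d - p) * pochhammer (z + of_nat (d - p)) p)"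

lemma skew_rep_as_box_sum:
  "c \<le> d \<Longrightarrow> skew_rep X z c = (\<Sum>p\<le>d. \<Sum>q\<le>d. if p + q = c then X p q * pochhammer (z + of_nat q) p else 0)"
  by (simp add: skew_rep_def sum_box_diagonal)

lemma skew_rep_aone: "skew_rep aone = skew_one"
proof (intro ext)
  fix z d
  have "skew_rep aone z d = (\<Sum>p\<le>d. if p = 0 then (if d = 0 then 1 else 0) else 0)"
    unfolding skew_rep_def aone_def by (rule sum.cong) auto
  then show "skew_rep aone z d = skew_one z d" by (simp add: skew_one_def)
qed

text \<open>The image of \<open>b\<^sup>q a\<^sup>r\<close> is \<open>(z t)\<^sup>r t\<^sup>q = pochhammer z r \<cdot> t\<^sup>q\<^sup>+\<^sup>r\<close>.\<close>

lemma skew_rep_nf: "skew_rep (nf q r) z (q + r) = pochhammer z r"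
proof (induction r arbitrary: z)
  case 0
  have "skew_rep (nf q 0) z q = (\<Sum>k\<le>q. if k = 0 then 1 else 0)"
    unfolding skew_rep_def by (rule sum.cong) auto
  then show ?case by (simp del: nf.simps)
next
  case (Suc r)
  define n where "n = q + r"
  define rec_fst where "rec_fst k = (if k \<ge> 1 then nf q r (k - 1) (Suc n - k) else 0) * pochhammer (z + of_nat (Suc n - k)) k" for k
  define rec_snd where "rec_snd k = (if Suc n - k \<ge> 1 then of_nat (n - k) * nf q r k (n - k) else 0) * pochhammer (z + of_nat (Suc n - k)) k" for k
  have "skew_rep (nf q (Suc r)) z (Suc n) = (\<Sum>k\<le>Suc n. rec_fst k - rec_snd k)"
    unfolding skew_rep_def by (rule sum.cong) (simp_all add: rec_fst_def rec_snd_def left_diff_distrib)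
  also have "\<dots> = (\<Sum>k\<le>Suc n. rec_fst k) - (\<Sum>k\<le>Suc n. rec_snd k)"
    by (simp add: sum_subtractf)
  also have "(\<Sum>k\<le>Suc n. rec_fst k) = (\<Sum>k\<le>n. nf q r k (n - k) * pochhammer (z + of_nat (n - k)) (Suc k))"
    unfolding sum.atMost_Suc_shift by (simp add: rec_fst_def)
  also have "(\<Sum>k\<le>Suc n. rec_snd k) = (\<Sum>k\<le>n. nf q r k (n - k) * (of_nat (n - k) * pochhammer (z + of_nat (Suc n - k)) k))"
  proof -
    have "rec_snd (Suc n) = 0" by (simp add: rec_snd_def nf_eq_0 n_def)
    moreover have "rec_snd k = nf q r k (n - k) * (of_nat (n - k) * pochhammer (z + of_nat (Suc n - k)) k)" for k
      by (cases "k \<le> r") (auto simp: rec_snd_def nf_eq_0 n_def Suc_diff_le)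
    ultimately show ?thesis by simp
  qed
  also have "(\<Sum>k\<le>n. nf q r k (n - k) * pochhammer (z + of_nat (n - k)) (Suc k))
     - (\<Sum>k\<le>n. nf q r k (n - k) * (of_nat (n - k) * pochhammer (z + of_nat (Suc n - k)) k))
     = z * skew_rep (nf q r) (z + 1) n"
    unfolding sum_subtractf[symmetric] skew_rep_def sum_distrib_left
  proof (rule sum.cong)
    fix k assume "k \<in> {..n}"
    then have "Suc n - k = Suc (n - k)" by auto
    then show "nf q r k (n - k) * pochhammer (z + of_nat (n - k)) (Suc k)
       - nf q r k (n - k) * (of_nat (n - k) * pochhammer (z + of_nat (Suc n - k)) k)
       = z * (nf q r k (n - k) * pochhammer ((z + 1) + of_nat (n - k)) k)"
      by (simp add: pochhammer_rec algebra_simps)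
  qed simp
  also have "\<dots> = pochhammer z (Suc r)"
    using Suc.IH[of "z + 1"] by (simp add: n_def pochhammer_rec)
  finally show ?case by (simp add: n_def)
qed

text \<open>The image of \<open>a\<^sup>p (b\<^sup>q a\<^sup>r) b\<^sup>s\<close>.\<close>

lemma skew_rep_monomial_product:
  "skew_rep (\<lambda>i j. if p \<le> i \<and> s \<le> j then nf q r (i - p) (j - s) else 0) z d
   = (if p + q + r + s = d then pochhammer (z + of_nat s) r * pochhammer (z + of_nat (s + q + r)) p else 0)"
proof (cases "p + q + r + s = d")
  case False
  have "(if p \<le> i \<and> s \<le> d - i then nf q r (i - p) (d - i - s) else 0) = 0" if "i \<le> d" for i
    using False that by (auto intro!: nf_eq_0)
  then show ?thesis using False by (simp add: skew_rep_def)
next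
  case True
  define g where "g i = (if p \<le> i \<and> s \<le> d - i then nf q r (i - p) (d - i - s) else 0)
    * pochhammer (z + of_nat (d - i)) i" for i
  have "skew_rep (\<lambda>i j. if p \<le> i \<and> s \<le> j then nf q r (i - p) (j - s) else 0) z d = (\<Sum>i\<le>d. g i)"
    by (simp add: skew_rep_def g_def)
  also have "\<dots> = (\<Sum>i\<in>{p..p + (q + r)}. g i)"
    by (rule sum.mono_neutral_right) (use True in \<open>auto simp: g_def\<close>)
  also have "\<dots> = (\<Sum>k\<le>q + r. g (k + p))"
    using sum.shift_bounds_cl_nat_ivl[of g 0 p "q + r"] by (simp add: atLeast0AtMost add.commute)
  also have "\<dots> = (\<Sum>k\<le>q + r. nf q r k (q + r - k) * pochhammer ((z + of_nat s) + of_nat (q + r - k)) k)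
                   * pochhammer (z + of_nat (s + q + r)) p"
    unfolding sum_distrib_right
  proof (rule sum.cong)
    fix k assume "k \<in> {..q + r}"
    then have k: "k \<le> q + r" by simp
    have idx: "d - (k + p) - s = q + r - k" "d - (k + p) = s + (q + r - k)"
      using True k by auto
    have shift: "of_nat (q + r - k) + of_nat k = (of_nat q + of_nat r :: complex)"
      using k by (simp add: of_nat_diff)
    show "g (k + p) = nf q r k (q + r - k) * pochhammer ((z + of_nat s) + of_nat (q + r - k)) k
        * pochhammer (z + of_nat (s + q + r)) p"
      unfolding g_def idx by (simp add: pochhammer_product' shift add.assoc mult.assoc)
  qed simp
  also have "\<dots> = pochhammer (z + of_nat s) r * pochhammer (z + of_nat (s + q + r)) p"
    using skew_rep_nf[of q r "z + of_nat s"] by (simp add: skew_rep_def)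
  finally show ?thesis using True by simp
qed

lemma skew_rep_amult: "skew_rep (amult X Y) = skew_mult (skew_rep Y) (skew_rep X)"
proof (intro ext)
  fix z d
  define M where "M p q r s = X p q * Y r s * (if p + q + r + s = d
    then pochhammer (z + of_nat s) r * pochhammer (z + of_nat (s + q + r)) p else 0)" for p q r s
  have "skew_rep (amult X Y) z d = (\<Sum>i\<le>d. \<Sum>p\<le>d. \<Sum>s\<le>d. \<Sum>q\<le>d. \<Sum>r\<le>d. X p q * Y r s *
      ((if p \<le> i \<and> s \<le> d - i then nf q r (i - p) (d - i - s) else 0) * pochhammer (z + of_nat (d - i)) i))"
    unfolding skew_rep_def
    by (intro sum.cong refl) (simp add: amult_as_box_sum[of _ "d - _" d] sum_distrib_right, intro sum.cong refl, simp)
  also have "\<dots> = (\<Sum>p\<le>d. \<Sum>s\<le>d. \<Sum>q\<le>d. \<Sum>r\<le>d. M p q r s)"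
    unfolding sum_rotate5 sum_distrib_left[symmetric] M_def
    by (simp only: skew_rep_monomial_product[unfolded skew_rep_def])
  also have "\<dots> = skew_mult (skew_rep Y) (skew_rep X) z d"
  proof -
    have "skew_mult (skew_rep Y) (skew_rep X) z d = (\<Sum>c\<le>d. \<Sum>r\<le>d. \<Sum>s\<le>d. \<Sum>p\<le>d. \<Sum>q\<le>d.
        if r + s = c \<and> p + q = d - c
        then Y r s * pochhammer (z + of_nat s) r * (X p q * pochhammer (z + of_nat c + of_nat q) p) else 0)"
      unfolding skew_mult_def
    proof (intro sum.cong refl)
      fix c assume "c \<in> {..d}"
      then have c: "c \<le> d" "d - c \<le> d" by auto
      then show "skew_rep Y z c * skew_rep X (z + of_nat c) (d - c) = (\<Sum>r\<le>d. \<Sum>s\<le>d. \<Sum>p\<le>d. \<Sum>q\<le>d.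
          if r + s = c \<and> p + q = d - c
          then Y r s * pochhammer (z + of_nat s) r * (X p q * pochhammer (z + of_nat c + of_nat q) p) else 0)"
        unfolding skew_rep_as_box_sum[OF c(1)] skew_rep_as_box_sum[OF c(2)] sum_distrib_right
        unfolding sum_distrib_left
        by (intro sum.cong refl) auto
    qed
    also have "\<dots> = (\<Sum>r\<le>d. \<Sum>s\<le>d. \<Sum>p\<le>d. \<Sum>q\<le>d. if p + q + r + s = d
        then Y r s * pochhammer (z + of_nat s) r * (X p q * pochhammer (z + of_nat (r + s) + of_nat q) p) else 0)"
    proof -
      have "(\<Sum>c\<le>d. if r + s = c \<and> p + q = d - c then F c else 0) = (if p + q + r + s = d then F (r + s) else 0)"
        for p q r s and F :: "nat \<Rightarrow> complex"
      proof -
        have "(\<Sum>c\<le>d. if r + s = c \<and> p + q = d - c then F c else 0)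
            = (\<Sum>c\<le>d. if c = r + s then (if p + q + r + s = d then F c else 0) else 0)"
          by (rule sum.cong) auto
        then show ?thesis by simp
      qed
      then show ?thesis by (subst sum_rotate5) simp
    qed
    also have "\<dots> = (\<Sum>s\<le>d. \<Sum>p\<le>d. \<Sum>q\<le>d. \<Sum>r\<le>d. if p + q + r + s = d
        then Y r s * pochhammer (z + of_nat s) r * (X p q * pochhammer (z + of_nat (r + s) + of_nat q) p) else 0)"
      by (rule sum_rotate4)
    also have "\<dots> = (\<Sum>p\<le>d. \<Sum>s\<le>d. \<Sum>q\<le>d. \<Sum>r\<le>d. M p q r s)"
      by (subst sum.swap) (intro sum.cong refl, simp add: M_def algebra_simps)
    finally show ?thesis by simp
  qed
  finally show "skew_rep (amult X Y) z d = skew_mult (skew_rep Y) (skew_rep X) z d" .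
qed

lemma inj_skew_rep: "inj skew_rep"
proof (rule injI)
  fix A B :: ser
  assume eq: "skew_rep A = skew_rep B"
  define D where "D p q = A p q - B p q" for p q
  have D: "(\<Sum>p\<le>d. D p (d - p) * pochhammer (z + of_nat (d - p)) p) = 0" for z d
  proof -
    have "skew_rep A z d - skew_rep B z d = 0" using eq by simp
    then show ?thesis unfolding skew_rep_def D_def by (simp add: sum_subtractf[symmetric] algebra_simps)
  qed
  have "D t (d - t) = 0" if "t \<le> d" for t d
    using that
  proof (induction t rule: less_induct)
    case (less t)
    \<comment> \<open>At \<open>z = t + 1 - d\<close> the terms with \<open>p > t\<close> vanish and the term \<open>p = t\<close> carries \<open>fact t\<close>.\<close>
    define z :: complex where "z = of_nat (t + 1) - of_nat d"
    have summand: "D p (d - p) * pochhammer (z + of_nat (d - p)) p = (if p = t then D t (d - t) * fact t else 0)"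
      if "p \<le> d" for p
    proof -
      have zp: "z + of_nat (d - p) = of_nat (t + 1) - of_nat p"
        using that by (simp add: z_def of_nat_diff)
      consider "p < t" | "p = t" | "t < p" by linarith
      then show ?thesis
      proof cases
        case 1
        then show ?thesis using less.IH[of p] less.prems by simp
      next
        case 2
        then show ?thesis using zp by (simp add: pochhammer_fact)
      next
        case 3
        then have "z + of_nat (d - p) = - of_nat (p - t - 1)"
          using zp by (simp add: of_nat_diff)
        moreover have "pochhammer (- of_nat (p - t - 1) :: complex) p = 0"
          using 3 by (subst pochhammer_of_nat_eq_0_iff) linarith
        ultimately show ?thesis using 3 by simp
      qed
    qed
    have "0 = (\<Sum>p\<le>d. D p (d - p) * pochhammer (z + of_nat (d - p)) p)"
      using D by simp
    also have "\<dots> = (\<Sum>p\<le>d. if p = t then D t (d - t) * fact t else 0)"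
      by (intro sum.cong refl) (rule summand, simp)
    also have "\<dots> = D t (d - t) * fact t"
      using less.prems by simp
    finally show ?case by simp
  qed
  from this[of i "i + j" for i j] show "A = B"
    by (intro ext) (simp add: D_def)
qed

lemma amult_assoc: "amult (amult X Y) Z = amult X (amult Y Z)"
  by (rule injD[OF inj_skew_rep]) (simp add: skew_rep_amult skew_mult_assoc)

lemma amult_aone_left: "amult aone X = X"
  by (rule injD[OF inj_skew_rep]) (simp add: skew_rep_amult skew_rep_aone skew_mult_one_right)

lemma amult_aone_right: "amult X aone = X"
  by (rule injD[OF inj_skew_rep]) (simp add: skew_rep_amult skew_rep_aone skew_mult_one_left)

section \<open>The formal right inverse\<close>

definition amult_lower :: "ser \<Rightarrow> ser \<Rightarrow> ser" where
  "amult_lower X Y i j = (\<Sum>p\<le>i. \<Sum>s\<le>j. \<Sum>q\<le>i + j. \<Sum>r\<le>i + j.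
     if (p = 0 \<and> q = 0) \<or> i + j \<le> r + s then 0 else X p q * Y r s * nf q r (i - p) (j - s))"

lemma amult_eq_lower: "amult X Y i j = X 0 0 * Y i j + amult_lower X Y i j"
proof -
  \<comment> \<open>The nested conditions are ordered so that the sums collapse innermost first.\<close>
  have split: "X p q * Y r s * nf q r (i - p) (j - s)
      = (if r = i then if q = 0 then if s = j then if p = 0 then X 0 0 * Y i j else 0 else 0 else 0 else 0)
      + (if (p = 0 \<and> q = 0) \<or> i + j \<le> r + s then 0 else X p q * Y r s * nf q r (i - p) (j - s))"
    if "p \<le> i" "s \<le> j" for p s q r
  proof (cases "p = 0 \<and> q = 0")
    case True
    then show ?thesis using that by (auto simp: nf_0_left)
  next
    case False
    then show ?thesis using that by (auto intro!: nf_eq_0)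
  qed
  have "amult X Y i j = (\<Sum>p\<le>i. \<Sum>s\<le>j. \<Sum>q\<le>i + j. \<Sum>r\<le>i + j.
      if r = i then if q = 0 then if s = j then if p = 0 then X 0 0 * Y i j else 0 else 0 else 0 else 0)
      + amult_lower X Y i j"
    by (simp add: amult_def amult_lower_def split sum.distrib)
  also have "(\<Sum>p\<le>i. \<Sum>s\<le>j. \<Sum>q\<le>i + j. \<Sum>r\<le>i + j.
      if r = i then if q = 0 then if s = j then if p = 0 then X 0 0 * Y i j else 0 else 0 else 0 else 0)
      = X 0 0 * Y i j"
    by simp
  finally show ?thesis .
qed

function rinv :: "ser \<Rightarrow> ser" where
  "rinv X i j = aone i j - (\<Sum>p\<le>i. \<Sum>s\<le>j. \<Sum>q\<le>i + j. \<Sum>r\<le>i + j.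
     if (p = 0 \<and> q = 0) \<or> i + j \<le> r + s then 0 else X p q * rinv X r s * nf q r (i - p) (j - s))"
  by auto
termination by (relation "measure (\<lambda>(X, i, j). i + j)") auto

declare rinv.simps [simp del]

lemma rinv_eq: "rinv X i j = aone i j - amult_lower X (rinv X) i j"
  unfolding amult_lower_def by (subst rinv.simps) simp

lemma amult_rinv: "X 0 0 = 1 \<Longrightarrow> amult X (rinv X) = aone"
  by (intro ext) (simp add: amult_eq_lower rinv_eq[of X])

lemma amult_aone_commute:
  assumes "X 0 0 = 1" and XY: "amult X Y = aone"
  shows "amult Y X = aone"
proof -
  have "X 0 0 * Y 0 0 = 1"
    using fun_cong[OF fun_cong[OF XY, of 0], of 0] by (simp add: amult_eq_lower amult_lower_def aone_def)
  then have YZ: "amult Y (rinv Y) = aone"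
    using assms(1) by (simp add: amult_rinv)
  have "X = amult (amult X Y) (rinv Y)"
    by (simp add: amult_assoc YZ amult_aone_right)
  also have "\<dots> = rinv Y"
    by (simp add: XY amult_aone_left)
  finally show ?thesis using YZ by simp
qed

section \<open>Growth of the right inverse\<close>

definition majorant :: "real \<Rightarrow> nat \<Rightarrow> nat \<Rightarrow> real" where
  "majorant K r s = K ^ (r + s) * fact (r + s) / fact r"

lemma sum_pochhammer_div_fact:
  "(\<Sum>m\<le>n. pochhammer (of_nat q) m / fact m) = (of_nat ((q + n) choose n) :: 'a::field_char_0)"
proof -
  have "pochhammer (of_nat q) m / fact m = ((of_nat q - 1 + of_nat m) gchoose m :: 'a)" for m
    by (simp add: gbinomial_pochhammer')
  then show ?thesis
    using gbinomial_parallel_sum[of "of_nat q - 1 :: 'a" n] by (simp add: binomial_gbinomial add.commute)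
qed

lemma sum_majorant_norm_nf:
  assumes "p \<le> i" "q \<le> j"
  shows "(\<Sum>s\<le>j. \<Sum>r\<le>i + j. majorant K r s * norm (nf q r (i - p) (j - s)))
       = K ^ (i + j - (p + q)) * fact (i + j - (p + q)) / fact (i - p) * (j choose q)"
proof -
  define k where "k = i - p"
  define N where "N = i + j - (p + q)"
  define g where "g m = pochhammer (real q) m / fact m" for m
  have inner: "(\<Sum>r\<le>i + j. majorant K r s * norm (nf q r k (j - s)))
      = (if s \<le> j - q then K ^ N * fact N / fact k * g (j - q - s) else 0)" if "s \<le> j" for s
  proof -
    define r0 where "r0 = k + (j - s) - q"
    have "r0 \<le> i + j" unfolding r0_def k_def by linarith
    have "(\<Sum>r\<le>i + j. majorant K r s * norm (nf q r k (j - s)))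
        = (\<Sum>r\<le>i + j. if r = r0 then (if s \<le> j - q then majorant K r0 s * real ((r0 choose k) * pochhammer q (r0 - k)) else 0) else 0)"
      using assms that by (intro sum.cong refl) (auto simp: norm_nf r0_def)
    also have "\<dots> = (if s \<le> j - q then majorant K r0 s * real ((r0 choose k) * pochhammer q (r0 - k)) else 0)"
      using \<open>r0 \<le> i + j\<close> by simp
    also have "\<dots> = (if s \<le> j - q then K ^ N * fact N / fact k * g (j - q - s) else 0)"
    proof (cases "s \<le> j - q")
      case True
      have "r0 + s = N" "r0 - k = j - q - s" "k \<le> r0"
        using assms that True by (auto simp: r0_def N_def k_def)
      then show ?thesis
        using True by (simp add: majorant_def g_def binomial_fact pochhammer_of_nat[symmetric] field_simps)
    qed simp
    finally show ?thesis .
  qed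
  have "(\<Sum>s\<le>j. \<Sum>r\<le>i + j. majorant K r s * norm (nf q r (i - p) (j - s)))
      = K ^ N * fact N / fact k * (\<Sum>s\<le>j. if s \<le> j - q then g (j - q - s) else 0)"
    by (simp add: k_def[symmetric] inner sum_distrib_left if_distrib cong: if_cong)
  also have "(\<Sum>s\<le>j. if s \<le> j - q then g (j - q - s) else 0) = (\<Sum>s\<le>j - q. g (j - q - s))"
    by (rule sum_atMost_restrict) simp
  also have "\<dots> = (\<Sum>m\<le>j - q. g m)"
    using sum.atLeastAtMost_rev[of g 0 "j - q"] by (simp add: atLeast0AtMost)
  also have "\<dots> = real (j choose q)"
    using assms(2) by (simp add: g_def sum_pochhammer_div_fact binomial_symmetric[symmetric])
  finally show ?thesis by (simp add: k_def N_def)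
qed

lemma fact_mult_choose_le:
  assumes "p \<le> i" "q \<le> j"
  shows "fact (i + j - (p + q)) * fact q * (j choose q) * fact i \<le> (fact (i + j) * fact (i - p) :: nat)"
proof -
  have fact_i: "fact i = fact p * fact (i - p) * (i choose p)"
    using binomial_fact_lemma[OF assms(1)] by (simp add: algebra_simps)
  have fact_n: "fact (i + j) = fact (p + q) * fact (i + j - (p + q)) * ((i + j) choose (p + q))"
    using binomial_fact_lemma[of "p + q" "i + j"] assms by (simp add: algebra_simps)
  have "(1::nat) \<le> (p + q) choose p"
    by (simp add: Suc_leI)
  then have "fact p * fact q * 1 \<le> fact p * fact q * ((p + q) choose p)"
    by (rule mult_le_mono2)
  also have "\<dots> = fact (p + q)"
    using binomial_fact_lemma[of p "p + q"] by simp
  finally have "fact p * fact q \<le> (fact (p + q) :: nat)"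
    by simp
  moreover have "(i choose p) * (j choose q) \<le> (i + j) choose (p + q)"
  proof -
    have "(i choose p) * (j choose (p + q - p)) \<le> (\<Sum>k\<le>p + q. (i choose k) * (j choose (p + q - k)))"
      by (rule member_le_sum) auto
    then show ?thesis by (simp add: vandermonde)
  qed
  ultimately have "fact (i + j - (p + q)) * (fact p * fact q) * ((i choose p) * (j choose q))
      \<le> fact (i + j - (p + q)) * fact (p + q) * ((i + j) choose (p + q))"
    by (intro mult_le_mono order_refl)
  then show ?thesis
    unfolding fact_i fact_n by (simp add: algebra_simps)
qed

lemma majorant_convolution_le:
  assumes "p \<le> i" "0 < K"
  shows "fact q * (\<Sum>s\<le>j. \<Sum>r\<le>i + j. majorant K r s * norm (nf q r (i - p) (j - s)))
    \<le> majorant K i j / K ^ (p + q)"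
proof (cases "q \<le> j")
  case False
  then have "norm (nf q r (i - p) (j - s)) = 0" for r s
    by (auto simp: norm_nf)
  then show ?thesis
    using assms by (simp add: majorant_def)
next
  case True
  define n where "n = i + j"
  define e where "e = p + q"
  have "e \<le> n" using assms True by (simp add: n_def e_def)
  have "real (fact (n - e) * fact q * (j choose q) * fact i) \<le> real (fact n * fact (i - p))"
    unfolding n_def e_def using fact_mult_choose_le[OF assms(1) True] by (simp only: of_nat_le_iff)
  then have comb: "fact (n - e) * fact q * real (j choose q) / fact (i - p) \<le> fact n / fact i"
    by (simp add: field_simps)
  have "fact q * (\<Sum>s\<le>j. \<Sum>r\<le>i + j. majorant K r s * norm (nf q r (i - p) (j - s)))
      = fact q * (K ^ (n - e) * fact (n - e) / fact (i - p) * real (j choose q))"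
    using sum_majorant_norm_nf[OF assms(1) True] by (simp add: n_def e_def)
  also have "\<dots> = K ^ n / K ^ e * (fact (n - e) * fact q * real (j choose q) / fact (i - p))"
    using assms \<open>e \<le> n\<close> by (simp add: power_diff)
  also have "\<dots> \<le> K ^ n / K ^ e * (fact n / fact i)"
    using assms by (intro mult_left_mono comb) simp
  also have "\<dots> = majorant K i j / K ^ (p + q)"
    by (simp add: majorant_def n_def e_def)
  finally show ?thesis .
qed

lemma geometric_sum_le:
  fixes t :: real
  assumes "0 \<le> t" "t \<le> 1/2"
  shows "(\<Sum>p\<le>n. t ^ p) \<le> 1 + 2 * t"
proof -
  have "(1 - t) * (\<Sum>p\<le>n. t ^ p) = 1 - t ^ Suc n"
    by (rule sum_gp_basic)
  also have "\<dots> \<le> (1 - t) * (1 + 2 * t)"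
  proof -
    have "(1 - t) * (1 + 2 * t) = 1 + t * (1 - 2 * t)"
      by (simp add: algebra_simps)
    moreover have "0 \<le> t ^ Suc n" "0 \<le> t * (1 - 2 * t)"
      using assms by simp_all
    ultimately show ?thesis by linarith
  qed
  finally show ?thesis
    using assms by (simp add: mult_le_cancel_left)
qed

lemma punctured_geometric_sum_le:
  fixes t :: real
  assumes "0 \<le> t" "t \<le> 1/2"
  shows "(\<Sum>p\<le>m. \<Sum>q\<le>n. if p = 0 \<and> q = 0 then 0 else t ^ (p + q)) \<le> 6 * t"
proof -
  have "(\<Sum>p\<le>m. \<Sum>q\<le>n. if p = 0 \<and> q = 0 then 0 else t ^ (p + q))
     = (\<Sum>p\<le>m. t ^ p) * (\<Sum>q\<le>n. t ^ q) - 1"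
  proof -
    have "(\<Sum>p\<le>m. \<Sum>q\<le>n. if p = 0 \<and> q = 0 then 0 else t ^ (p + q))
        = (\<Sum>p\<le>m. \<Sum>q\<le>n. t ^ p * t ^ q - (if q = 0 then if p = 0 then 1 else 0 else 0))"
      by (intro sum.cong refl) (auto simp: power_add)
    then show ?thesis by (simp add: sum_subtractf sum_product)
  qed
  also have "\<dots> \<le> (1 + 2 * t) * (1 + 2 * t) - 1"
    using assms by (intro diff_right_mono mult_mono geometric_sum_le sum_nonneg) auto
  also have "\<dots> \<le> 6 * t"
  proof -
    have "(1 + 2 * t) * (1 + 2 * t) - 1 = 6 * t - 2 * (t * (1 - 2 * t))"
      by (simp add: algebra_simps)
    moreover have "0 \<le> t * (1 - 2 * t)"
      using assms by simp
    ultimately show ?thesis by linarith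
  qed
  finally show ?thesis .
qed

lemma norm_amult_lower_le:
  assumes X: "\<And>p q. norm (X p q) \<le> C * R ^ (p + q) * fact q"
    and Y: "\<And>r s. r + s < i + j \<Longrightarrow> norm (Y r s) \<le> majorant K r s"
    and C: "0 \<le> C" and R: "0 < R" and K: "0 < K"
  shows "norm (amult_lower X Y i j)
    \<le> C * (\<Sum>p\<le>i. \<Sum>q\<le>i + j. if p = 0 \<and> q = 0 then 0 else (R / K) ^ (p + q)) * majorant K i j"
proof -
  define w where "w p q r s = norm (nf q r (i - p) (j - s))" for p q r s
  have majorant_nonneg: "0 \<le> majorant K r s" for r s
    using K by (simp add: majorant_def)
  have "norm (amult_lower X Y i j) \<le> (\<Sum>p\<le>i. \<Sum>s\<le>j. \<Sum>q\<le>i + j. \<Sum>r\<le>i + j.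
      if p = 0 \<and> q = 0 then 0 else C * R ^ (p + q) * (fact q * (majorant K r s * w p q r s)))"
    unfolding amult_lower_def
  proof (intro order_trans[OF norm_sum] sum_mono)
    fix p s q r
    show "norm (if (p = 0 \<and> q = 0) \<or> i + j \<le> r + s then 0 else X p q * Y r s * nf q r (i - p) (j - s))
      \<le> (if p = 0 \<and> q = 0 then 0 else C * R ^ (p + q) * (fact q * (majorant K r s * w p q r s)))"
    proof (cases "(p = 0 \<and> q = 0) \<or> i + j \<le> r + s")
      case True
      have "0 \<le> C * R ^ (p + q) * (fact q * (majorant K r s * w p q r s))"
        using C R majorant_nonneg by (intro mult_nonneg_nonneg) (simp_all add: w_def)
      then show ?thesis using True by auto
    next
      case False
      then have "norm (X p q * Y r s * nf q r (i - p) (j - s)) \<le> (C * R ^ (p + q) * fact q) * majorant K r s * w p q r s"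
        unfolding norm_mult w_def using C R majorant_nonneg by (intro mult_mono X Y mult_nonneg_nonneg) auto
      moreover have "\<not> (p = 0 \<and> q = 0)" using False by simp
      ultimately show ?thesis using False by (simp only: if_False if_not_P mult.assoc)
    qed
  qed
  also have "\<dots> = (\<Sum>p\<le>i. \<Sum>q\<le>i + j. if p = 0 \<and> q = 0 then 0
      else C * R ^ (p + q) * (fact q * (\<Sum>s\<le>j. \<Sum>r\<le>i + j. majorant K r s * w p q r s)))"
    by (rule sum.cong[OF refl], subst sum.swap, rule sum.cong[OF refl]) (simp add: sum_distrib_left)
  also have "\<dots> \<le> (\<Sum>p\<le>i. \<Sum>q\<le>i + j. if p = 0 \<and> q = 0 then 0
      else C * R ^ (p + q) * (majorant K i j / K ^ (p + q)))"
  proof (intro sum_mono)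
    fix p q assume "p \<in> {..i}"
    then have "fact q * (\<Sum>s\<le>j. \<Sum>r\<le>i + j. majorant K r s * w p q r s) \<le> majorant K i j / K ^ (p + q)"
      unfolding w_def using K by (intro majorant_convolution_le) simp_all
    then have "C * R ^ (p + q) * (fact q * (\<Sum>s\<le>j. \<Sum>r\<le>i + j. majorant K r s * w p q r s))
        \<le> C * R ^ (p + q) * (majorant K i j / K ^ (p + q))"
      using C R by (intro mult_left_mono) simp_all
    then show "(if p = 0 \<and> q = 0 then 0
        else C * R ^ (p + q) * (fact q * (\<Sum>s\<le>j. \<Sum>r\<le>i + j. majorant K r s * w p q r s)))
      \<le> (if p = 0 \<and> q = 0 then 0 else C * R ^ (p + q) * (majorant K i j / K ^ (p + q)))"
      by simp
  qed
  also have "\<dots> = C * (\<Sum>p\<le>i. \<Sum>q\<le>i + j. if p = 0 \<and> q = 0 then 0 else (R / K) ^ (p + q)) * majorant K i j"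
    by (simp add: sum_distrib_left sum_distrib_right power_divide if_distrib mult_ac cong: if_cong)
  finally show ?thesis .
qed

lemma norm_rinv_le:
  assumes X: "\<And>p q. norm (X p q) \<le> C * R ^ (p + q) * fact q" and C: "0 \<le> C" and R: "0 < R"
  shows "norm (rinv X i j) \<le> majorant (R * (6 * C + 2)) i j"
proof -
  define K where "K = R * (6 * C + 2)"
  have K: "0 < K"
    using C R by (simp add: K_def)
  have t: "R / K = 1 / (6 * C + 2)"
    using R by (simp add: K_def)
  have "norm (rinv X i j) \<le> majorant K i j"
  proof (induction "i + j" arbitrary: i j rule: less_induct)
    case less
    show ?case
    proof (cases "i + j = 0")
      case True
      then show ?thesis by (subst rinv_eq) (simp add: amult_lower_def aone_def majorant_def)
    next
      case False
      have "norm (rinv X i j) = norm (amult_lower X (rinv X) i j)"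
        using False by (subst rinv_eq) (auto simp: aone_def)
      also have "\<dots> \<le> C * (\<Sum>p\<le>i. \<Sum>q\<le>i + j. if p = 0 \<and> q = 0 then 0 else (R / K) ^ (p + q)) * majorant K i j"
        using X less.hyps C R K by (rule norm_amult_lower_le)
      also have "\<dots> \<le> C * (6 * (R / K)) * majorant K i j"
        using C K unfolding t
        by (intro mult_right_mono mult_left_mono punctured_geometric_sum_le) (simp_all add: majorant_def)
      also have "\<dots> \<le> 1 * majorant K i j"
        using C K unfolding t by (intro mult_right_mono) (simp_all add: majorant_def field_simps)
      finally show ?thesis by simp
    qed
  qed
  then show ?thesis by (simp add: K_def)
qed

lemma majorant_le:
  assumes "0 \<le> K"
  shows "majorant K p q \<le> (2 * K) ^ (p + q) * fact q"
proof -
  have "fact (p + q) = fact p * fact q * real ((p + q) choose p)"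
    using binomial_fact_lemma[of p "p + q"] by (metis add_diff_cancel_left' le_add1 of_nat_fact of_nat_mult)
  then have "majorant K p q = K ^ (p + q) * fact q * real ((p + q) choose p)"
    unfolding majorant_def by simp
  also have "\<dots> \<le> K ^ (p + q) * fact q * 2 ^ (p + q)"
    using assms binomial_le_pow2[of "p + q" p] by (intro mult_left_mono) (simp_all add: of_nat_le_iff[symmetric])
  also have "\<dots> = (2 * K) ^ (p + q) * fact q"
    by (simp add: power_mult_distrib)
  finally show ?thesis .
qed

lemma conv_ser_rinv:
  assumes "conv_ser X"
  shows "conv_ser (rinv X)"
proof -
  obtain R C where R: "R > 1" and C: "C > 0" and X: "\<And>p q. norm (X p q) \<le> C * R ^ (p + q) * fact q"
    using assms unfolding conv_ser_def by blast
  define K where "K = R * (6 * C + 2)"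
  have "2 < K"
    using R C mult_strict_mono[of 1 R 2 "6 * C + 2"] by (simp add: K_def)
  show ?thesis
    unfolding conv_ser_def
  proof (intro exI conjI allI)
    fix p q
    have "norm (rinv X p q) \<le> majorant K p q"
      unfolding K_def using X C R by (intro norm_rinv_le) simp_all
    also have "\<dots> \<le> 1 * (2 * K) ^ (p + q) * fact q"
      using \<open>2 < K\<close> majorant_le[of K p q] by simp
    finally show "norm (rinv X p q) \<le> 1 * (2 * K) ^ (p + q) * fact q" .
  qed (use \<open>2 < K\<close> in simp_all)
qed

theorem proposition1p1p7:
  fixes X :: ser
  assumes "conv_ser X" and "X 0 0 = 1"
  shows "\<exists>Y. conv_ser Y \<and> amult X Y = aone \<and> amult Y X = aone"
proof (intro exI conjI)
  show "conv_ser (rinv X)"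
    using assms(1) by (rule conv_ser_rinv)
  show right: "amult X (rinv X) = aone"
    using assms(2) by (rule amult_rinv)
  show "amult (rinv X) X = aone"
    using assms(2) right by (rule amult_aone_commute)
qed

end
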